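(* $\mathsf{ICK}$ is sound and complete with respect to conditional frames.
   Context: Formulas are generated by $\phi ::= p\mid\bot\mid\phi\wedge\phi\mid\phi\vee\phi\mid\phi\to\phi\mid\phi\mathrel{\Box\!\!\!\rightarrow}\phi$. $\mathsf{ICK}$ is the smallest set of formulas containing intuitionistic propositional logic, $(p\mathrel{\Box\!\!\!\rightarrow}(q\wedge r))\leftrightarrow((p\mathrel{\Box\!\!\!\rightarrow} q)\wedge(p\mathrel{\Box\!\!\!\rightarrow} r))$ and $(p\mathrel{\Box\!\!\!\rightarrow}\top)\leftrightarrow\top$, closed under uniform substitution, modus ponens, and the congruence rules for both arguments of $\mathrel{\Box\!\!\!\rightarrow}$. A conditional frame is $(X,\leq,\mathcal{R})$ with $(X,\leq)$ a nonempty preorder and $\mathcal{R}=\{R_a\mid a \text{ an upset}\}$ relations on $X$ with $(\leq\circ R_a)\subseteq(R_a\circ\leq)$ for every upset $a$. Valuations assign upsets to proposition letters; intuitionistic connectives are interpreted as in Kripke semantics, and $x\models\phi\mathrel{\Box\!\!\!\rightarrow}\psi$ iff every $y$ with $xR_{V(\phi)}y$ satisfies $\psi$, where $V(\phi)$ is the truth set of $\phi$. *)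

theory Defs
  imports Main
begin

datatype form =
    Var nat
  | Bot
  | Conj form form
  | Disj form form
  | Imp form form
  | Cond form form

definition Top :: form where "Top = Imp Bot Bot"
definition Iff :: "form \<Rightarrow> form \<Rightarrow> form" where
  "Iff a b = Conj (Imp a b) (Imp b a)"

primrec subst :: "(nat \<Rightarrow> form) \<Rightarrow> form \<Rightarrow> form" where
  "subst s (Var p) = s p"
| "subst s Bot = Bot"
| "subst s (Conj a b) = Conj (subst s a) (subst s b)"
| "subst s (Disj a b) = Disj (subst s a) (subst s b)"
| "subst s (Imp a b) = Imp (subst s a) (subst s b)"
| "subst s (Cond a b) = Cond (subst s a) (subst s b)"

inductive_set ICK :: "form set" where
  ax1: "Imp a (Imp b a) \<in> ICK"
| ax2: "Imp (Imp a (Imp b c)) (Imp (Imp a b) (Imp a c)) \<in> ICK"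
| ax3: "Imp (Conj a b) a \<in> ICK"
| ax4: "Imp (Conj a b) b \<in> ICK"
| ax5: "Imp a (Imp b (Conj a b)) \<in> ICK"
| ax6: "Imp a (Disj a b) \<in> ICK"
| ax7: "Imp b (Disj a b) \<in> ICK"
| ax8: "Imp (Imp a c) (Imp (Imp b c) (Imp (Disj a b) c)) \<in> ICK"
| ax9: "Imp Bot a \<in> ICK"
| axC: "Iff (Cond (Var 0) (Conj (Var 1) (Var 2)))
            (Conj (Cond (Var 0) (Var 1)) (Cond (Var 0) (Var 2))) \<in> ICK"
| axN: "Iff (Cond (Var 0) Top) Top \<in> ICK"
| us: "a \<in> ICK \<Longrightarrow> subst s a \<in> ICK"
| mp: "Imp a b \<in> ICK \<Longrightarrow> a \<in> ICK \<Longrightarrow> b \<in> ICK"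
| congL: "Iff a b \<in> ICK \<Longrightarrow> Iff (Cond a c) (Cond b c) \<in> ICK"
| congR: "Iff a b \<in> ICK \<Longrightarrow> Iff (Cond c a) (Cond c b) \<in> ICK"

definition upset :: "'w set \<Rightarrow> ('w \<Rightarrow> 'w \<Rightarrow> bool) \<Rightarrow> 'w set \<Rightarrow> bool" where
  "upset X le a \<longleftrightarrow> a \<subseteq> X \<and> (\<forall>x y. x \<in> a \<and> le x y \<longrightarrow> y \<in> a)"

text \<open>A conditional frame (X, le, R): X nonempty, le a preorder on X, and for every
upset a a relation R a on X with (le o R a) \<subseteq> (R a o le), composition read
diagrammatically: x le y, y R_a z implies x R_a w and w le z for some w.\<close>

definition cond_frame :: "'w set \<Rightarrow> ('w \<Rightarrow> 'w \<Rightarrow> bool) \<Rightarrow> ('w set \<Rightarrow> 'w \<Rightarrow> 'w \<Rightarrow> bool) \<Rightarrow> bool" where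
  "cond_frame X le R \<longleftrightarrow>
     X \<noteq> {} \<and>
     (\<forall>x y. le x y \<longrightarrow> x \<in> X \<and> y \<in> X) \<and>
     (\<forall>x\<in>X. le x x) \<and>
     (\<forall>x y z. le x y \<and> le y z \<longrightarrow> le x z) \<and>
     (\<forall>a. upset X le a \<longrightarrow>
        (\<forall>x y. R a x y \<longrightarrow> x \<in> X \<and> y \<in> X) \<and>
        (\<forall>x y z. le x y \<and> R a y z \<longrightarrow> (\<exists>w. R a x w \<and> le w z)))"

primrec tset :: "'w set \<Rightarrow> ('w \<Rightarrow> 'w \<Rightarrow> bool) \<Rightarrow> ('w set \<Rightarrow> 'w \<Rightarrow> 'w \<Rightarrow> bool)
                  \<Rightarrow> (nat \<Rightarrow> 'w set) \<Rightarrow> form \<Rightarrow> 'w set" where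
  "tset X le R V (Var p) = V p \<inter> X"
| "tset X le R V Bot = {}"
| "tset X le R V (Conj a b) = tset X le R V a \<inter> tset X le R V b"
| "tset X le R V (Disj a b) = tset X le R V a \<union> tset X le R V b"
| "tset X le R V (Imp a b) =
     {x \<in> X. \<forall>y. le x y \<longrightarrow> y \<in> tset X le R V a \<longrightarrow> y \<in> tset X le R V b}"
| "tset X le R V (Cond a b) =
     {x \<in> X. \<forall>y. R (tset X le R V a) x y \<longrightarrow> y \<in> tset X le R V b}"

definition frame_valid :: "'w set \<Rightarrow> ('w \<Rightarrow> 'w \<Rightarrow> bool) \<Rightarrow> ('w set \<Rightarrow> 'w \<Rightarrow> 'w \<Rightarrow> bool) \<Rightarrow> form \<Rightarrow> bool" where
  "frame_valid X le R \<phi> \<longleftrightarrow>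
     (\<forall>V. (\<forall>p. upset X le (V p)) \<longrightarrow> tset X le R V \<phi> = X)"

definition cf_valid :: "'w itself \<Rightarrow> form \<Rightarrow> bool" where
  "cf_valid _ \<phi> \<longleftrightarrow>
     (\<forall>(X::'w set) le R. cond_frame X le R \<longrightarrow> frame_valid X le R \<phi>)"

end

theory Submission
  imports Defs
begin

text \<open>Soundness: truth sets are upsets (for conditionals this is exactly the frame condition
  \<open>(\<le> \<circ> R\<^sub>a) \<subseteq> (R\<^sub>a \<circ> \<le>)\<close>), so the intuitionistic axioms hold as in Kripke semantics;
  axiom C holds on any relation, axiom N because \<open>R\<^sub>a\<close> stays inside the frame, the congruence
  rules because \<open>R\<^sub>a\<close> depends only on the truth set \<open>a\<close>, and substitution instances are
  evaluated by substituting truth sets into the valuation.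

  Completeness: the canonical frame consists of the prime theories ordered by inclusion, and
  \<open>R\<^sub>A\<close> relates \<open>\<Gamma>\<close> to \<open>\<Delta>\<close> when \<open>A\<close> is the truth set of some formula \<open>f\<close> and
  \<open>\<Delta>\<close> contains every \<open>g\<close> with \<open>f \<box>\<rightarrow> g \<in> \<Gamma>\<close>.  By the left congruence rule the choice of
  \<open>f\<close> is irrelevant, and axioms C, N with the right congruence rule make
  \<open>{g. f \<box>\<rightarrow> g \<in> \<Gamma>}\<close> closed under derivability, so if \<open>f \<box>\<rightarrow> g \<notin> \<Gamma>\<close> a prime
  extension of that set avoiding \<open>g\<close> is an \<open>R\<close>-successor refuting \<open>g\<close>.\<close>

lemma subst_Top [simp]: "subst s Top = Top"
  by (simp add: Top_def)

lemma subst_Iff [simp]: "subst s (Iff a b) = Iff (subst s a) (subst s b)"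
  by (simp add: Iff_def)

lemma Top_in_ICK: "Top \<in> ICK"
  unfolding Top_def by (rule ICK.ax9)

lemma ICK_imp_refl: "Imp a a \<in> ICK"
  by (meson ICK.ax1 ICK.ax2 ICK.mp)

lemma ICK_IffI: "Imp a b \<in> ICK \<Longrightarrow> Imp b a \<in> ICK \<Longrightarrow> Iff a b \<in> ICK"
  unfolding Iff_def by (meson ICK.ax5 ICK.mp)

lemma ICK_IffD1: "Iff a b \<in> ICK \<Longrightarrow> Imp a b \<in> ICK"
  unfolding Iff_def by (meson ICK.ax3 ICK.mp)

lemma ICK_IffD2: "Iff a b \<in> ICK \<Longrightarrow> Imp b a \<in> ICK"
  unfolding Iff_def by (meson ICK.ax4 ICK.mp)

lemma ICK_Iff_Top: "a \<in> ICK \<Longrightarrow> Iff a Top \<in> ICK"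
  by (meson ICK.ax1 ICK.mp ICK_IffI Top_in_ICK)

lemma ICK_Cond_Conj: "Iff (Cond f (Conj a b)) (Conj (Cond f a) (Cond f b)) \<in> ICK"
  using ICK.us[OF ICK.axC, of "\<lambda>n. if n = 0 then f else if n = 1 then a else b"] by simp

lemma ICK_Cond_Top: "Iff (Cond f Top) Top \<in> ICK"
  using ICK.us[OF ICK.axN, of "\<lambda>_. f"] by simp

section \<open>Derivations from hypotheses\<close>

inductive derives :: "form set \<Rightarrow> form \<Rightarrow> bool" for \<Gamma> where
  ICK: "a \<in> ICK \<Longrightarrow> derives \<Gamma> a"
| hyp: "a \<in> \<Gamma> \<Longrightarrow> derives \<Gamma> a"
| mp: "derives \<Gamma> (Imp a b) \<Longrightarrow> derives \<Gamma> a \<Longrightarrow> derives \<Gamma> b"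

lemma derives_mono: "derives \<Gamma> a \<Longrightarrow> \<Gamma> \<subseteq> \<Delta> \<Longrightarrow> derives \<Delta> a"
  by (induction rule: derives.induct) (auto intro: derives.intros)

lemma derives_empty_iff: "derives {} a \<longleftrightarrow> a \<in> ICK"
proof
  show "derives {} a \<Longrightarrow> a \<in> ICK"
    by (induction rule: derives.induct) (auto intro: ICK.mp)
qed (rule derives.ICK)

lemma derives_ImpI: "derives (insert a \<Gamma>) b \<Longrightarrow> derives \<Gamma> (Imp a b)"
proof (induction rule: derives.induct)
  case (ICK c)
  then show ?case by (meson ICK.ax1 derives.ICK derives.mp)
next
  case (hyp c)
  then show ?case
    by (metis ICK.ax1 ICK_imp_refl derives.ICK derives.hyp derives.mp insertE)
next
  case (mp c d)
  then show ?case by (meson ICK.ax2 derives.ICK derives.mp)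
qed

lemma derives_cut: "derives \<Gamma> a \<Longrightarrow> derives (insert a \<Gamma>) b \<Longrightarrow> derives \<Gamma> b"
  using derives_ImpI derives.mp by blast

lemma ICK_Imp_if_derives: "derives {a} b \<Longrightarrow> Imp a b \<in> ICK"
  using derives_ImpI derives_empty_iff by blast

lemma derives_finite_subset:
  "derives \<Gamma> a \<Longrightarrow> \<exists>\<Gamma>'. finite \<Gamma>' \<and> \<Gamma>' \<subseteq> \<Gamma> \<and> derives \<Gamma>' a"
proof (induction rule: derives.induct)
  case (ICK a)
  then show ?case using derives.ICK by blast
next
  case (hyp a)
  then show ?case by (intro exI[of _ "{a}"]) (auto intro: derives.hyp)
next
  case (mp a b)
  then obtain \<Gamma>\<^sub>1 \<Gamma>\<^sub>2 where "finite \<Gamma>\<^sub>1" "\<Gamma>\<^sub>1 \<subseteq> \<Gamma>" "derives \<Gamma>\<^sub>1 (Imp a b)"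
    and "finite \<Gamma>\<^sub>2" "\<Gamma>\<^sub>2 \<subseteq> \<Gamma>" "derives \<Gamma>\<^sub>2 a"
    by blast
  then show ?case
    by (intro exI[of _ "\<Gamma>\<^sub>1 \<union> \<Gamma>\<^sub>2"]) (meson Un_upper1 Un_upper2 derives.mp derives_mono finite_UnI le_sup_iff)
qed

lemma ICK_Conj_mp: "Iff (Conj (Imp a b) a) (Conj (Conj (Imp a b) a) b) \<in> ICK"
proof (rule ICK_IffI)
  let ?c = "Conj (Imp a b) a"
  have "derives {?c} ?c"
    by (simp add: derives.hyp)
  then have "derives {?c} (Imp a b)" and "derives {?c} a"
    by (meson ICK.ax3 ICK.ax4 derives.ICK derives.mp)+
  then have "derives {?c} (Conj ?c b)"
    by (meson ICK.ax5 \<open>derives {?c} ?c\<close> derives.ICK derives.mp)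
  then show "Imp ?c (Conj ?c b) \<in> ICK"
    by (rule ICK_Imp_if_derives)
qed (rule ICK.ax3)

section \<open>Prime theories\<close>

definition prime_theory :: "form set \<Rightarrow> bool" where
  "prime_theory \<Gamma> \<longleftrightarrow> (\<forall>a. derives \<Gamma> a \<longrightarrow> a \<in> \<Gamma>) \<and> Bot \<notin> \<Gamma> \<and>
     (\<forall>a b. Disj a b \<in> \<Gamma> \<longrightarrow> a \<in> \<Gamma> \<or> b \<in> \<Gamma>)"

lemma maximal_non_derivable_extension:
  assumes "\<not> derives \<Gamma> c"
  obtains \<Delta> where "\<Gamma> \<subseteq> \<Delta>" "\<not> derives \<Delta> c" "\<And>a. a \<notin> \<Delta> \<Longrightarrow> derives (insert a \<Delta>) c"
proof -
  let ?A = "{\<Delta>. \<Gamma> \<subseteq> \<Delta> \<and> \<not> derives \<Delta> c}"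
  have "\<exists>M\<in>?A. \<forall>\<Delta>\<in>?A. M \<subseteq> \<Delta> \<longrightarrow> \<Delta> = M"
  proof (rule subset_Zorn_nonempty)
    show "?A \<noteq> {}" using assms by blast
  next
    fix C assume C: "C \<noteq> {}" "subset.chain ?A C"
    then have "C \<subseteq> ?A" by (simp add: subset.chain_def)
    have "\<not> derives (\<Union>C) c"
    proof
      assume "derives (\<Union>C) c"
      then obtain F where F: "finite F" "F \<subseteq> \<Union>C" "derives F c"
        using derives_finite_subset by blast
      then obtain \<Delta> where "\<Delta> \<in> C" "F \<subseteq> \<Delta>"
        using finite_subset_Union_chain[OF F(1,2) C] by blast
      then show False using \<open>C \<subseteq> ?A\<close> F(3) derives_mono by blast
    qed
    then show "\<Union>C \<in> ?A" using C \<open>C \<subseteq> ?A\<close> by blast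
  qed
  then obtain M where "M \<in> ?A" and "\<forall>\<Delta>\<in>?A. M \<subseteq> \<Delta> \<longrightarrow> \<Delta> = M"
    by blast
  then show ?thesis
    using that[of M] by blast
qed

lemma prime_extension:
  assumes "\<not> derives \<Gamma> c"
  obtains \<Delta> where "\<Gamma> \<subseteq> \<Delta>" "prime_theory \<Delta>" "c \<notin> \<Delta>"
proof -
  obtain \<Delta> where \<Delta>: "\<Gamma> \<subseteq> \<Delta>" "\<not> derives \<Delta> c"
    and max: "\<And>a. a \<notin> \<Delta> \<Longrightarrow> derives (insert a \<Delta>) c"
    using maximal_non_derivable_extension[OF assms] by blast
  have "a \<in> \<Delta>" if "derives \<Delta> a" for a
    using max derives_cut \<Delta>(2) that by blast
  moreover have "Bot \<notin> \<Delta>"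
    using \<Delta>(2) by (meson ICK.ax9 derives.hyp derives.ICK derives.mp)
  moreover have "a \<in> \<Delta> \<or> b \<in> \<Delta>" if "Disj a b \<in> \<Delta>" for a b
  proof (rule ccontr)
    assume "\<not> (a \<in> \<Delta> \<or> b \<in> \<Delta>)"
    then have "derives \<Delta> (Imp a c)" "derives \<Delta> (Imp b c)"
      using max derives_ImpI by blast+
    then have "derives \<Delta> c"
      using that by (meson ICK.ax8 derives.hyp derives.ICK derives.mp)
    then show False using \<Delta>(2) by blast
  qed
  moreover have "c \<notin> \<Delta>"
    using \<Delta>(2) derives.hyp by blast
  ultimately show ?thesis
    using that \<Delta>(1) unfolding prime_theory_def by blast
qed

lemma prime_theory_derives: "prime_theory \<Gamma> \<Longrightarrow> derives \<Gamma> a \<Longrightarrow> a \<in> \<Gamma>"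
  unfolding prime_theory_def by blast

lemma prime_theory_ICK: "prime_theory \<Gamma> \<Longrightarrow> a \<in> ICK \<Longrightarrow> a \<in> \<Gamma>"
  using prime_theory_derives derives.ICK by blast

lemma prime_theory_mp: "prime_theory \<Gamma> \<Longrightarrow> Imp a b \<in> \<Gamma> \<Longrightarrow> a \<in> \<Gamma> \<Longrightarrow> b \<in> \<Gamma>"
  by (meson prime_theory_derives derives.hyp derives.mp)

lemma prime_theory_Conj_iff: "prime_theory \<Gamma> \<Longrightarrow> Conj a b \<in> \<Gamma> \<longleftrightarrow> a \<in> \<Gamma> \<and> b \<in> \<Gamma>"
  by (meson ICK.ax3 ICK.ax4 ICK.ax5 prime_theory_ICK prime_theory_mp)

lemma prime_theory_Disj_iff: "prime_theory \<Gamma> \<Longrightarrow> Disj a b \<in> \<Gamma> \<longleftrightarrow> a \<in> \<Gamma> \<or> b \<in> \<Gamma>"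
  unfolding prime_theory_def by (meson ICK.ax6 ICK.ax7 derives.hyp derives.ICK derives.mp)

lemma prime_theory_Bot: "prime_theory \<Gamma> \<Longrightarrow> Bot \<notin> \<Gamma>"
  unfolding prime_theory_def by blast

lemma prime_theory_Iff: "prime_theory \<Gamma> \<Longrightarrow> Iff a b \<in> ICK \<Longrightarrow> a \<in> \<Gamma> \<longleftrightarrow> b \<in> \<Gamma>"
  by (meson ICK_IffD1 ICK_IffD2 prime_theory_ICK prime_theory_mp)

lemma prime_theory_Cond_derives:
  assumes \<Gamma>: "prime_theory \<Gamma>"
  shows "derives {b. Cond f b \<in> \<Gamma>} c \<Longrightarrow> Cond f c \<in> \<Gamma>"
proof (induction rule: derives.induct)
  case (ICK c)
  then have "Iff (Cond f c) (Cond f Top) \<in> ICK"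
    by (rule ICK.congR[OF ICK_Iff_Top])
  moreover have "Cond f Top \<in> \<Gamma>"
    using prime_theory_Iff[OF \<Gamma> ICK_Cond_Top] prime_theory_ICK[OF \<Gamma> Top_in_ICK] by blast
  ultimately show ?case
    using prime_theory_Iff[OF \<Gamma>] by blast
next
  case (hyp c)
  then show ?case by simp
next
  case (mp a b)
  then have "Cond f (Conj (Imp a b) a) \<in> \<Gamma>"
    using prime_theory_Iff[OF \<Gamma> ICK_Cond_Conj] prime_theory_Conj_iff[OF \<Gamma>] by blast
  then have "Cond f (Conj (Conj (Imp a b) a) b) \<in> \<Gamma>"
    using prime_theory_Iff[OF \<Gamma> ICK.congR[OF ICK_Conj_mp]] by blast
  then show ?case
    using prime_theory_Iff[OF \<Gamma> ICK_Cond_Conj] prime_theory_Conj_iff[OF \<Gamma>] by blast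
qed

section \<open>Soundness\<close>

lemma cond_frameD:
  assumes "cond_frame X le R"
  shows cond_frame_le_in: "le x y \<Longrightarrow> x \<in> X \<and> y \<in> X"
    and cond_frame_refl: "x \<in> X \<Longrightarrow> le x x"
    and cond_frame_trans: "le x y \<Longrightarrow> le y z \<Longrightarrow> le x z"
    and cond_frame_R_in: "upset X le a \<Longrightarrow> R a x y \<Longrightarrow> x \<in> X \<and> y \<in> X"
    and cond_frame_R_back: "upset X le a \<Longrightarrow> le x y \<Longrightarrow> R a y z \<Longrightarrow> \<exists>w. R a x w \<and> le w z"
  using assms unfolding cond_frame_def by blast+

lemma tset_subset: "tset X le R V a \<subseteq> X"
  by (induction a) auto

lemma tset_in: "x \<in> tset X le R V a \<Longrightarrow> x \<in> X"
  using tset_subset[of X le R V a] by blast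

lemma tset_subst: "tset X le R V (subst s a) = tset X le R (\<lambda>p. tset X le R V (s p)) a"
  by (induction a) (auto dest: subsetD[OF tset_subset])

lemma tset_upset:
  assumes frame: "cond_frame X le R" and val: "\<forall>p. upset X le (V p)"
  shows "upset X le (tset X le R V a)"
proof (induction a)
  case (Var p)
  then show ?case using val unfolding upset_def by auto
next
  case Bot
  then show ?case by (simp add: upset_def)
next
  case (Conj a b)
  then show ?case by (auto simp: upset_def)
next
  case (Disj a b)
  then show ?case by (auto simp: upset_def)
next
  case (Imp a b)
  show ?case
    unfolding upset_def using cond_frame_le_in[OF frame] cond_frame_trans[OF frame] by auto
next
  case (Cond a b)
  show ?case
    unfolding upset_def
  proof (intro conjI allI impI)
    fix x y assume xy: "x \<in> tset X le R V (Cond a b) \<and> le x y"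
    have "z \<in> tset X le R V b" if yz: "R (tset X le R V a) y z" for z
    proof -
      obtain w where "R (tset X le R V a) x w" "le w z"
        using cond_frame_R_back[OF frame Cond.IH(1)] xy yz by blast
      then show ?thesis using xy Cond.IH(2) unfolding upset_def by auto
    qed
    then show "y \<in> tset X le R V (Cond a b)"
      using xy cond_frame_le_in[OF frame] by auto
  qed auto
qed

lemma tset_persistent:
  "cond_frame X le R \<Longrightarrow> \<forall>p. upset X le (V p) \<Longrightarrow> x \<in> tset X le R V a \<Longrightarrow> le x y
    \<Longrightarrow> y \<in> tset X le R V a"
  using tset_upset unfolding upset_def by blast

lemma tset_ImpI:
  "x \<in> X \<Longrightarrow> (\<And>y. le x y \<Longrightarrow> y \<in> tset X le R V a \<Longrightarrow> y \<in> tset X le R V b)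
    \<Longrightarrow> x \<in> tset X le R V (Imp a b)"
  unfolding tset.simps(5) by blast

lemma tset_ImpD:
  "x \<in> tset X le R V (Imp a b) \<Longrightarrow> le x y \<Longrightarrow> y \<in> tset X le R V a \<Longrightarrow> y \<in> tset X le R V b"
  unfolding tset.simps(5) by blast

lemma tset_Imp_eq_iff:
  assumes "cond_frame X le R"
  shows "tset X le R V (Imp a b) = X \<longleftrightarrow> tset X le R V a \<subseteq> tset X le R V b"
  using cond_frame_refl[OF assms] tset_subset[of X le R V a] by auto

lemma tset_Iff_eq_iff:
  assumes "cond_frame X le R"
  shows "tset X le R V (Iff a b) = X \<longleftrightarrow> tset X le R V a = tset X le R V b"
proof -
  have "tset X le R V (Iff a b) = tset X le R V (Imp a b) \<inter> tset X le R V (Imp b a)"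
    by (simp only: Iff_def tset.simps(3))
  then have "tset X le R V (Iff a b) = X \<longleftrightarrow>
      tset X le R V (Imp a b) = X \<and> tset X le R V (Imp b a) = X"
    using tset_subset[of X le R V] by blast
  then show ?thesis
    unfolding tset_Imp_eq_iff[OF assms] by blast
qed

lemma tset_K_axiom:
  assumes frame: "cond_frame X le R" and val: "\<forall>p. upset X le (V p)"
  shows "tset X le R V (Imp a (Imp b a)) = X"
  unfolding tset_Imp_eq_iff[OF frame]
  by (auto intro!: tset_ImpI dest: tset_in tset_persistent[OF frame val])

lemma tset_S_axiom:
  assumes frame: "cond_frame X le R"
  shows "tset X le R V (Imp (Imp a (Imp b c)) (Imp (Imp a b) (Imp a c))) = X"
  unfolding tset_Imp_eq_iff[OF frame]
proof
  fix x assume x: "x \<in> tset X le R V (Imp a (Imp b c))"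
  show "x \<in> tset X le R V (Imp (Imp a b) (Imp a c))"
  proof (intro tset_ImpI)
    fix y z assume "le x y" "y \<in> tset X le R V (Imp a b)" "le y z" "z \<in> tset X le R V a"
    moreover have "le z z"
      using cond_frame_refl[OF frame tset_in] \<open>z \<in> tset X le R V a\<close> .
    moreover have "le x z"
      using cond_frame_trans[OF frame \<open>le x y\<close> \<open>le y z\<close>] .
    ultimately show "z \<in> tset X le R V c"
      using x by (meson tset_ImpD)
  qed (use x in \<open>blast dest: tset_in\<close>)+
qed

lemma tset_Conj_intro_axiom:
  assumes frame: "cond_frame X le R" and val: "\<forall>p. upset X le (V p)"
  shows "tset X le R V (Imp a (Imp b (Conj a b))) = X"
  unfolding tset_Imp_eq_iff[OF frame]
  by (auto intro!: tset_ImpI dest: tset_in tset_persistent[OF frame val])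

lemma tset_Disj_elim_axiom:
  assumes frame: "cond_frame X le R"
  shows "tset X le R V (Imp (Imp a c) (Imp (Imp b c) (Imp (Disj a b) c))) = X"
  unfolding tset_Imp_eq_iff[OF frame]
proof
  fix x assume x: "x \<in> tset X le R V (Imp a c)"
  show "x \<in> tset X le R V (Imp (Imp b c) (Imp (Disj a b) c))"
  proof (intro tset_ImpI)
    fix y z
    assume "le x y" "y \<in> tset X le R V (Imp b c)" "le y z" "z \<in> tset X le R V (Disj a b)"
    moreover have "le z z"
      using cond_frame_refl[OF frame tset_in] \<open>z \<in> tset X le R V (Disj a b)\<close> .
    moreover have "le x z"
      using cond_frame_trans[OF frame \<open>le x y\<close> \<open>le y z\<close>] .
    ultimately show "z \<in> tset X le R V c"
      using x by (auto dest: tset_ImpD)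
  qed (use x in \<open>blast dest: tset_in\<close>)+
qed

lemma tset_basic_axioms:
  assumes frame: "cond_frame X le R"
  shows "tset X le R V (Imp (Conj a b) a) = X" "tset X le R V (Imp (Conj a b) b) = X"
    "tset X le R V (Imp a (Disj a b)) = X" "tset X le R V (Imp b (Disj a b)) = X"
    "tset X le R V (Imp Bot a) = X"
  unfolding tset_Imp_eq_iff[OF frame] by auto

lemma tset_Cond_Conj:
  assumes frame: "cond_frame X le R"
  shows "tset X le R V (Iff (Cond f (Conj a b)) (Conj (Cond f a) (Cond f b))) = X"
  unfolding tset_Iff_eq_iff[OF frame] by auto

lemma tset_Cond_Top:
  assumes frame: "cond_frame X le R" and val: "\<forall>p. upset X le (V p)"
  shows "tset X le R V (Iff (Cond f Top) Top) = X"
proof -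
  have "y \<in> X" if "R (tset X le R V f) x y" for x y
    using cond_frame_R_in[OF frame tset_upset[OF frame val] that] by blast
  then show ?thesis
    unfolding tset_Iff_eq_iff[OF frame] by (auto simp: Top_def)
qed

lemma frame_validI:
  "(\<And>V. \<forall>p. upset X le (V p) \<Longrightarrow> tset X le R V a = X) \<Longrightarrow> frame_valid X le R a"
  unfolding frame_valid_def by blast

lemma frame_validD:
  "frame_valid X le R a \<Longrightarrow> \<forall>p. upset X le (V p) \<Longrightarrow> tset X le R V a = X"
  unfolding frame_valid_def by blast

lemma frame_valid_subst:
  assumes frame: "cond_frame X le R" and "frame_valid X le R a"
  shows "frame_valid X le R (subst s a)"
proof (rule frame_validI)
  fix V assume "\<forall>p::nat. upset X le (V p)"
  then have "\<forall>p. upset X le (tset X le R V (s p))"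
    using tset_upset[OF frame] by blast
  then show "tset X le R V (subst s a) = X"
    unfolding tset_subst by (rule frame_validD[OF assms(2)])
qed

lemma frame_valid_mp:
  assumes frame: "cond_frame X le R"
    and "frame_valid X le R (Imp a b)" "frame_valid X le R a"
  shows "frame_valid X le R b"
proof (rule frame_validI)
  fix V assume "\<forall>p::nat. upset X le (V p)"
  then have "tset X le R V a \<subseteq> tset X le R V b" "tset X le R V a = X"
    using assms(2,3)[THEN frame_validD] tset_Imp_eq_iff[OF frame] by blast+
  then show "tset X le R V b = X"
    using tset_subset[of X le R V b] by blast
qed

lemma frame_valid_Cond_cong:
  assumes frame: "cond_frame X le R" and "frame_valid X le R (Iff a b)"
  shows "frame_valid X le R (Iff (Cond a c) (Cond b c))"
    and "frame_valid X le R (Iff (Cond c a) (Cond c b))"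
  using frame_validD[OF assms(2)] unfolding frame_valid_def tset_Iff_eq_iff[OF frame] by simp_all

lemma frame_valid_axioms:
  assumes frame: "cond_frame X le R"
  shows "frame_valid X le R (Imp a (Imp b a))"
    and "frame_valid X le R (Imp (Imp a (Imp b c)) (Imp (Imp a b) (Imp a c)))"
    and "frame_valid X le R (Imp (Conj a b) a)" "frame_valid X le R (Imp (Conj a b) b)"
    and "frame_valid X le R (Imp a (Imp b (Conj a b)))"
    and "frame_valid X le R (Imp a (Disj a b))" "frame_valid X le R (Imp b (Disj a b))"
    and "frame_valid X le R (Imp (Imp a c) (Imp (Imp b c) (Imp (Disj a b) c)))"
    and "frame_valid X le R (Imp Bot a)"
    and "frame_valid X le R (Iff (Cond f (Conj a b)) (Conj (Cond f a) (Cond f b)))"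
    and "frame_valid X le R (Iff (Cond f Top) Top)"
  by (intro frame_validI; simp del: tset.simps
      add: tset_K_axiom tset_S_axiom tset_Conj_intro_axiom tset_Disj_elim_axiom tset_basic_axioms tset_Cond_Conj tset_Cond_Top frame)+

theorem frame_valid_if_ICK:
  assumes frame: "cond_frame X le R"
  shows "\<phi> \<in> ICK \<Longrightarrow> frame_valid X le R \<phi>"
proof (induction rule: ICK.induct)
  case (us a s)
  from us.IH show ?case by (rule frame_valid_subst[OF frame])
next
  case (mp a b)
  from mp.IH show ?case by (rule frame_valid_mp[OF frame])
next
  case (congL a b c)
  from congL.IH show ?case by (rule frame_valid_Cond_cong[OF frame])
next
  case (congR a b c)
  from congR.IH show ?case by (rule frame_valid_Cond_cong[OF frame])
qed (rule frame_valid_axioms[OF frame])+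

section \<open>The canonical frame\<close>

definition canon_worlds :: "form set set" where
  "canon_worlds = {\<Gamma>. prime_theory \<Gamma>}"

definition worlds_containing :: "form \<Rightarrow> form set set" where
  "worlds_containing a = {\<Gamma> \<in> canon_worlds. a \<in> \<Gamma>}"

definition canon_le :: "form set \<Rightarrow> form set \<Rightarrow> bool" where
  "canon_le \<Gamma> \<Delta> \<longleftrightarrow> \<Gamma> \<in> canon_worlds \<and> \<Delta> \<in> canon_worlds \<and> \<Gamma> \<subseteq> \<Delta>"

text \<open>Only truth sets of formulas have \<open>R\<close>-successors; on every other upset the relation is
  empty, which the frame condition permits.\<close>

definition canon_R :: "form set set \<Rightarrow> form set \<Rightarrow> form set \<Rightarrow> bool" where
  "canon_R A \<Gamma> \<Delta> \<longleftrightarrow> \<Gamma> \<in> canon_worlds \<and> \<Delta> \<in> canon_worlds \<and>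
     (\<exists>f. A = worlds_containing f \<and> {b. Cond f b \<in> \<Gamma>} \<subseteq> \<Delta>)"

definition canon_val :: "nat \<Rightarrow> form set set" where
  "canon_val p = worlds_containing (Var p)"

lemma ICK_Imp_if_worlds_containing_subset:
  assumes "worlds_containing a \<subseteq> worlds_containing b"
  shows "Imp a b \<in> ICK"
proof (rule ccontr)
  assume "Imp a b \<notin> ICK"
  then have "\<not> derives {a} b"
    using ICK_Imp_if_derives by blast
  then obtain \<Delta> where "{a} \<subseteq> \<Delta>" "prime_theory \<Delta>" "b \<notin> \<Delta>"
    by (rule prime_extension)
  then show False
    using assms unfolding worlds_containing_def canon_worlds_def by blast
qed

lemma ICK_Iff_if_worlds_containing_eq:
  "worlds_containing a = worlds_containing b \<Longrightarrow> Iff a b \<in> ICK"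
  by (simp add: ICK_IffI ICK_Imp_if_worlds_containing_subset)

lemma canon_Imp_iff:
  assumes "\<Gamma> \<in> canon_worlds"
  shows "Imp a b \<in> \<Gamma> \<longleftrightarrow> (\<forall>\<Delta>. canon_le \<Gamma> \<Delta> \<longrightarrow> a \<in> \<Delta> \<longrightarrow> b \<in> \<Delta>)"
proof
  assume "Imp a b \<in> \<Gamma>"
  then show "\<forall>\<Delta>. canon_le \<Gamma> \<Delta> \<longrightarrow> a \<in> \<Delta> \<longrightarrow> b \<in> \<Delta>"
    unfolding canon_le_def canon_worlds_def using prime_theory_mp by blast
next
  assume ext: "\<forall>\<Delta>. canon_le \<Gamma> \<Delta> \<longrightarrow> a \<in> \<Delta> \<longrightarrow> b \<in> \<Delta>"
  show "Imp a b \<in> \<Gamma>"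
  proof (rule ccontr)
    assume "Imp a b \<notin> \<Gamma>"
    then have "\<not> derives (insert a \<Gamma>) b"
      using assms derives_ImpI prime_theory_derives unfolding canon_worlds_def by blast
    then obtain \<Delta> where "insert a \<Gamma> \<subseteq> \<Delta>" "prime_theory \<Delta>" "b \<notin> \<Delta>"
      by (rule prime_extension)
    then show False
      using ext assms unfolding canon_le_def canon_worlds_def by blast
  qed
qed

lemma canon_Cond_iff:
  assumes "\<Gamma> \<in> canon_worlds"
  shows "Cond a b \<in> \<Gamma> \<longleftrightarrow> (\<forall>\<Delta>. canon_R (worlds_containing a) \<Gamma> \<Delta> \<longrightarrow> b \<in> \<Delta>)"
proof
  assume ab: "Cond a b \<in> \<Gamma>"
  show "\<forall>\<Delta>. canon_R (worlds_containing a) \<Gamma> \<Delta> \<longrightarrow> b \<in> \<Delta>"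
  proof (intro allI impI)
    fix \<Delta> assume "canon_R (worlds_containing a) \<Gamma> \<Delta>"
    then obtain f where f: "worlds_containing a = worlds_containing f" "{b. Cond f b \<in> \<Gamma>} \<subseteq> \<Delta>"
      unfolding canon_R_def by blast
    have "Iff (Cond a b) (Cond f b) \<in> ICK"
      by (rule ICK.congL[OF ICK_Iff_if_worlds_containing_eq[OF f(1)]])
    then have "Cond f b \<in> \<Gamma>"
      using ab assms prime_theory_Iff unfolding canon_worlds_def by blast
    then show "b \<in> \<Delta>"
      using f(2) by blast
  qed
next
  assume ext: "\<forall>\<Delta>. canon_R (worlds_containing a) \<Gamma> \<Delta> \<longrightarrow> b \<in> \<Delta>"
  show "Cond a b \<in> \<Gamma>"
  proof (rule ccontr)
    assume "Cond a b \<notin> \<Gamma>"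
    then have "\<not> derives {c. Cond a c \<in> \<Gamma>} b"
      using assms prime_theory_Cond_derives unfolding canon_worlds_def by blast
    then obtain \<Delta> where "{c. Cond a c \<in> \<Gamma>} \<subseteq> \<Delta>" "prime_theory \<Delta>" "b \<notin> \<Delta>"
      by (rule prime_extension)
    then show False
      using ext assms unfolding canon_R_def canon_worlds_def by blast
  qed
qed

lemma canon_truth: "tset canon_worlds canon_le canon_R canon_val a = worlds_containing a"
proof (induction a)
  case (Var p)
  then show ?case by (auto simp: canon_val_def worlds_containing_def)
next
  case Bot
  then show ?case
    using prime_theory_Bot by (auto simp: worlds_containing_def canon_worlds_def)
next
  case (Conj a b)
  then show ?case
    using prime_theory_Conj_iff by (auto simp: worlds_containing_def canon_worlds_def)
next
  case (Disj a b)
  then show ?case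
    using prime_theory_Disj_iff by (auto simp: worlds_containing_def canon_worlds_def)
next
  case (Imp a b)
  then show ?case
    using canon_Imp_iff by (auto simp: worlds_containing_def canon_le_def)
next
  case (Cond a b)
  then show ?case
    using canon_Cond_iff by (auto simp: worlds_containing_def canon_R_def)
qed

lemma cond_frame_canon:
  assumes "canon_worlds \<noteq> {}"
  shows "cond_frame canon_worlds canon_le canon_R"
  using assms unfolding cond_frame_def canon_le_def canon_R_def by blast

lemma upset_canon_val: "upset canon_worlds canon_le (canon_val p)"
  unfolding upset_def canon_val_def worlds_containing_def canon_le_def by blast

theorem ICK_if_cf_valid:
  assumes "cf_valid TYPE(form set) a"
  shows "a \<in> ICK"
proof (rule ccontr)
  assume "a \<notin> ICK"
  then have "\<not> derives {} a"
    using derives_empty_iff by blast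
  then obtain \<Delta> where "prime_theory \<Delta>" "a \<notin> \<Delta>"
    by (rule prime_extension)
  then have "\<Delta> \<in> canon_worlds" "\<Delta> \<notin> worlds_containing a"
    unfolding canon_worlds_def worlds_containing_def by blast+
  moreover have "tset canon_worlds canon_le canon_R canon_val a = canon_worlds"
    using assms cond_frame_canon upset_canon_val \<open>\<Delta> \<in> canon_worlds\<close>
    unfolding cf_valid_def frame_valid_def by blast
  ultimately show False
    unfolding canon_truth by blast
qed

theorem theorem4p26:
  fixes \<phi> :: form
  shows "(\<phi> \<in> ICK \<longrightarrow> cf_valid TYPE('w) \<phi>)
       \<and> (cf_valid TYPE(form set) \<phi> \<longrightarrow> \<phi> \<in> ICK)"
  using frame_valid_if_ICK ICK_if_cf_valid unfolding cf_valid_def by blast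

end
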